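(* Let $p>1$, $\beta=1/(p-1)$, $\gamma=\frac{p-2}{2(p-1)}$, and let $\phi$ be a global solution on $[0,\infty)$ of $\phi''=\tfrac12 y\phi'-\gamma\phi-|\phi'|^p$, $\phi(0)=0$, $\phi'(0)=\alpha>0$, with $\phi,\phi'>0$ on $(0,\infty)$ and such that, for some $\bar R>0$, $\phi''<0$ on $[0,\bar R)$ and $\phi''>0$ on $(\bar R,\infty)$. Let $y_0>0$ be such that $\phi,\phi',\phi''>0$ on $[y_0,\infty)$. Then: (i) there exists $C>0$ such that $\phi'(y)\le Cy^\beta$ for all $y\ge y_0$; (ii) the function $Z(y)=y^{-1}(\phi'(y))^{p-1}$ satisfies $\liminf_{y\to\infty}Z(y)\ge\frac12\min(1,\beta)$; in particular there exists $C_1>0$ such that $\phi'(y)\ge C_1y^\beta$ for all $y\ge1$. *)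

theory Defs
  imports "HOL-Analysis.Analysis"
begin

end

theory Submission imports Defs begin

text \<open>
  On the tail \<open>[y\<^sub>0, \<infinity>)\<close> the derivative \<open>\<phi>'\<close> increases, so \<open>\<phi> y \<le> \<phi> y\<^sub>0 + y \<phi>' y\<close>, and the
  equation gives \<open>\<phi>'' \<ge> \<phi>' (c y - \<phi>'\<^bsup>p-1\<^esup>) - K\<close> with \<open>c = 1/2 - max \<gamma> 0 = min 1 \<beta> / 2\<close>,
  together with a similar upper bound. Positivity of \<open>\<phi>''\<close> therefore forces \<open>\<phi>'\<^bsup>p-1\<^esup> \<le> M y\<close>.
  For \<open>0 < a < c\<close> the function \<open>W = \<phi>'\<^bsup>p-1\<^esup> - a y\<close> satisfies \<open>W' \<ge> 1\<close> wherever \<open>W < 0\<close> far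
  out, because there \<open>\<phi>'' \<ge> (c - a) y \<phi>' - K\<close> and \<open>\<phi>'\<close> is bounded below; so \<open>W\<close> is eventually
  nonnegative. This is the liminf bound, and continuity and positivity of \<open>\<phi>'\<close> on a compact
  interval \<open>[1, Y]\<close> extend it to all \<open>y \<ge> 1\<close>.
\<close>

lemma has_real_derivative_at_within_atLeast_imp_at:
  fixes f :: "real \<Rightarrow> real"
  assumes "(f has_real_derivative D) (at x within {a..})" and "a < x"
  shows "(f has_real_derivative D) (at x)"
proof -
  have "at x within {a..} = at x"
    by (rule at_within_interior) (use \<open>a < x\<close> in simp)
  with assms(1) show ?thesis by simp
qed

lemma nonneg_if_DERIV_pos_where_neg:
  fixes f f' :: "real \<Rightarrow> real"
  assumes "a \<le> b"
    and deriv: "\<And>s. a \<le> s \<Longrightarrow> s \<le> b \<Longrightarrow> DERIV f s :> f' s"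
    and pos: "\<And>s. a \<le> s \<Longrightarrow> s \<le> b \<Longrightarrow> f s < 0 \<Longrightarrow> f' s > 0"
    and "f a \<ge> 0"
  shows "f b \<ge> 0"
proof -
  have "continuous_on {a..b} f"
    using deriv by (meson DERIV_isCont atLeastAtMost_iff continuous_at_imp_continuous_on)
  then obtain m where m: "m \<in> {a..b}" and min: "\<And>t. t \<in> {a..b} \<Longrightarrow> f m \<le> f t"
    using continuous_attains_inf[of "{a..b}" f] \<open>a \<le> b\<close> by auto
  have "f m \<ge> 0"
  proof (rule ccontr)
    assume neg: "\<not> f m \<ge> 0"
    with \<open>f a \<ge> 0\<close> m have "a < m" by (cases "m = a") auto
    have "f' m > 0" using pos m neg by auto
    then obtain e where "e > 0" and dec: "\<And>h. h > 0 \<Longrightarrow> h < e \<Longrightarrow> f (m - h) < f m"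
      using DERIV_pos_inc_left[OF deriv] m by (meson atLeastAtMost_iff)
    define h where "h = min (e / 2) (m - a)"
    have "h > 0" "h < e" "m - h \<in> {a..b}"
      using \<open>e > 0\<close> \<open>a < m\<close> m by (auto simp: h_def)
    with dec min show False by fastforce
  qed
  with min[of b] \<open>a \<le> b\<close> show ?thesis by auto
qed

lemma eventually_nonneg_if_DERIV_ge_1_where_neg:
  fixes f f' :: "real \<Rightarrow> real"
  assumes deriv: "\<And>s. a \<le> s \<Longrightarrow> DERIV f s :> f' s"
    and growth: "\<And>s. a \<le> s \<Longrightarrow> f s < 0 \<Longrightarrow> f' s \<ge> 1"
  shows "eventually (\<lambda>s. f s \<ge> 0) at_top"
proof -
  define b where "b = a + \<bar>f a\<bar>"
  have "a \<le> b" by (simp add: b_def)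
  have barrier: "f t \<ge> 0" if "a \<le> s" "s \<le> t" "f s \<ge> 0" for s t
  proof (rule nonneg_if_DERIV_pos_where_neg[of s t f f'])
    fix x assume "s \<le> x" "x \<le> t"
    then show "DERIV f x :> f' x" "f x < 0 \<Longrightarrow> f' x > 0"
      using that deriv growth[of x] by auto
  qed (use that in auto)
  have "f b \<ge> 0"
  proof (cases "\<exists>s\<in>{a..b}. f s \<ge> 0")
    case True
    then show ?thesis using barrier \<open>a \<le> b\<close> by auto
  next
    case False
    have "f a - a \<le> f b - b"
    proof (rule DERIV_nonneg_imp_nondecreasing[OF \<open>a \<le> b\<close>])
      fix x assume "a \<le> x" "x \<le> b"
      with False have "f x < 0" by (meson atLeastAtMost_iff not_le)
      with \<open>a \<le> x\<close> deriv growth show "\<exists>y. DERIV (\<lambda>s. f s - s) x :> y \<and> y \<ge> 0"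
        by (intro exI[of _ "f' x - 1"]) (auto intro!: derivative_eq_intros)
    qed
    then show ?thesis by (simp add: b_def)
  qed
  then show ?thesis
    unfolding eventually_at_top_linorder using barrier \<open>a \<le> b\<close> by blast
qed

lemma diff_le_mult_deriv_at_right_end:
  fixes f f' :: "real \<Rightarrow> real"
  assumes "a \<le> t"
    and deriv: "\<And>x. a \<le> x \<Longrightarrow> x \<le> t \<Longrightarrow> DERIV f x :> f' x"
    and mono: "\<And>x. a \<le> x \<Longrightarrow> x \<le> t \<Longrightarrow> f' x \<le> f' t"
  shows "f t - f a \<le> (t - a) * f' t"
proof -
  have "f t - t * f' t \<le> f a - a * f' t"
  proof (rule DERIV_nonpos_imp_nonincreasing[OF \<open>a \<le> t\<close>])
    fix x assume "a \<le> x" "x \<le> t"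
    with deriv mono show "\<exists>y. DERIV (\<lambda>s. f s - s * f' t) x :> y \<and> y \<le> 0"
      by (intro exI[of _ "f' x - f' t"]) (auto intro!: derivative_eq_intros)
  qed
  then show ?thesis by (simp add: algebra_simps)
qed

lemma le_powr_inverse_if_powr_le:
  fixes x z q :: real
  assumes "0 < x" "0 < q" "x powr q \<le> z"
  shows "x \<le> z powr (1 / q)"
proof -
  have "x = (x powr q) powr (1 / q)" using assms by (simp add: powr_powr)
  also have "\<dots> \<le> z powr (1 / q)" using assms by (intro powr_mono2) auto
  finally show ?thesis .
qed

lemma powr_inverse_le_if_le_powr:
  fixes x z q :: real
  assumes "0 < x" "0 < q" "0 \<le> z" "z \<le> x powr q"
  shows "z powr (1 / q) \<le> x"
proof -
  have "z powr (1 / q) \<le> (x powr q) powr (1 / q)" using assms by (intro powr_mono2) auto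
  also have "\<dots> = x" using assms by (simp add: powr_powr)
  finally show ?thesis .
qed

lemma ge_powr_on_atLeast_1_if_eventually_ge:
  fixes f :: "real \<Rightarrow> real"
  assumes cont: "continuous_on {1..} f"
    and pos: "\<And>y. 1 \<le> y \<Longrightarrow> f y > 0"
    and "a > 0"
    and ev: "eventually (\<lambda>y. a * y powr r \<le> f y) at_top"
  shows "\<exists>C>0. \<forall>y\<ge>1. C * y powr r \<le> f y"
proof -
  obtain Y where Y: "\<And>y. y \<ge> Y \<Longrightarrow> a * y powr r \<le> f y" and "Y \<ge> 1"
    using ev unfolding eventually_at_top_linorder by (metis max.cobounded1 max.cobounded2 order_trans)
  have "continuous_on {1..Y} (\<lambda>y. f y / y powr r)"
    using cont by (auto intro!: continuous_intros elim: continuous_on_subset)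
  then obtain z where z: "z \<in> {1..Y}" and min: "\<And>y. y \<in> {1..Y} \<Longrightarrow> f z / z powr r \<le> f y / y powr r"
    using continuous_attains_inf[of "{1..Y}" "\<lambda>y. f y / y powr r"] \<open>Y \<ge> 1\<close> by auto
  define C where "C = min a (f z / z powr r)"
  have "C > 0" using \<open>a > 0\<close> pos z by (simp add: C_def)
  moreover have "C * y powr r \<le> f y" if "y \<ge> 1" for y
  proof (cases "y \<ge> Y")
    case True
    then show ?thesis using Y[of y] by (smt (verit) C_def mult_right_mono powr_ge_zero)
  next
    case False
    with that min[of y] have "C \<le> f y / y powr r" by (simp add: C_def)
    then show ?thesis using that by (simp add: pos_le_divide_eq)
  qed
  ultimately show ?thesis by blast
qed

lemma half_minus_max_gamma_eq:
  fixes p :: real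
  assumes "p > 1"
  shows "1 / 2 - max ((p - 2) / (2 * (p - 1))) 0 = min 1 (1 / (p - 1)) / 2"
proof (cases "p \<ge> 2")
  case True
  then have "max ((p - 2) / (2 * (p - 1))) 0 = (p - 2) / (2 * (p - 1))"
    and "min 1 (1 / (p - 1)) = 1 / (p - 1)" by simp_all
  moreover have "1 / 2 - (p - 2) / (2 * (p - 1)) = 1 / (p - 1) / 2"
    using assms by (simp add: field_simps)
  ultimately show ?thesis by (simp only:)
next
  case False
  then have "(p - 2) / (2 * (p - 1)) < 0" using assms by (simp add: divide_neg_pos)
  moreover have "1 / (p - 1) > 1" using False assms by simp
  ultimately show ?thesis by (simp add: min_def max_def)
qed

locale convex_profile_tail =
  fixes p y\<^sub>0 :: real and \<phi> \<phi>' \<phi>'' :: "real \<Rightarrow> real"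
  assumes p_gt_1: "p > 1"
    and y0_pos: "y\<^sub>0 > 0"
    and DERIV_\<phi>: "\<And>y. y \<ge> y\<^sub>0 \<Longrightarrow> DERIV \<phi> y :> \<phi>' y"
    and DERIV_\<phi>': "\<And>y. y \<ge> y\<^sub>0 \<Longrightarrow> DERIV \<phi>' y :> \<phi>'' y"
    and ode: "\<And>y. y \<ge> y\<^sub>0 \<Longrightarrow>
       \<phi>'' y = y / 2 * \<phi>' y - ((p - 2) / (2 * (p - 1))) * \<phi> y - \<bar>\<phi>' y\<bar> powr p"
    and tail_pos: "\<And>y. y \<ge> y\<^sub>0 \<Longrightarrow> \<phi> y > 0 \<and> \<phi>' y > 0 \<and> \<phi>'' y > 0"
begin

definition \<gamma> :: real where "\<gamma> = (p - 2) / (2 * (p - 1))"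

lemma half_minus_max_\<gamma>: "1 / 2 - max \<gamma> 0 = min 1 (1 / (p - 1)) / 2"
  unfolding \<gamma>_def by (rule half_minus_max_gamma_eq[OF p_gt_1])

lemma \<phi>'_pos: "y \<ge> y\<^sub>0 \<Longrightarrow> \<phi>' y > 0"
  using tail_pos by blast

lemma \<phi>'_mono:
  assumes "y\<^sub>0 \<le> s" "s \<le> t"
  shows "\<phi>' s \<le> \<phi>' t"
proof (rule DERIV_nonneg_imp_nondecreasing[OF \<open>s \<le> t\<close>])
  fix x assume "s \<le> x" "x \<le> t"
  with assms DERIV_\<phi>' tail_pos show "\<exists>y. DERIV \<phi>' x :> y \<and> y \<ge> 0"
    by (meson less_imp_le order_trans)
qed

lemma \<phi>_le_\<phi>_y0_plus_mult_\<phi>':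
  assumes "t \<ge> y\<^sub>0"
  shows "\<phi> t \<le> \<phi> y\<^sub>0 + t * \<phi>' t"
proof -
  have "\<phi> t - \<phi> y\<^sub>0 \<le> (t - y\<^sub>0) * \<phi>' t"
    by (rule diff_le_mult_deriv_at_right_end) (use assms DERIV_\<phi> \<phi>'_mono in auto)
  also have "\<dots> \<le> t * \<phi>' t"
    using y0_pos \<phi>'_pos[OF assms] by (simp add: algebra_simps)
  finally show ?thesis by simp
qed

lemma \<phi>''_eq:
  assumes "s \<ge> y\<^sub>0"
  shows "\<phi>'' s = s / 2 * \<phi>' s - \<gamma> * \<phi> s - \<phi>' s * \<phi>' s powr (p - 1)"
proof -
  have "\<phi>' s powr p = \<phi>' s * \<phi>' s powr (p - 1)"
    using powr_add[of "\<phi>' s" 1 "p - 1"] \<phi>'_pos[OF assms] by simp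
  then show ?thesis using ode[OF assms] \<phi>'_pos[OF assms] by (simp add: \<gamma>_def)
qed

lemma \<phi>''_le:
  assumes "s \<ge> y\<^sub>0"
  shows "\<phi>'' s \<le> (1 / 2 + \<bar>\<gamma>\<bar>) * s * \<phi>' s + \<bar>\<gamma>\<bar> * \<phi> y\<^sub>0 - \<phi>' s * \<phi>' s powr (p - 1)"
proof -
  have "- \<gamma> * \<phi> s \<le> \<bar>\<gamma>\<bar> * \<phi> s"
    using tail_pos[OF assms] by (intro mult_right_mono) auto
  also have "\<dots> \<le> \<bar>\<gamma>\<bar> * (\<phi> y\<^sub>0 + s * \<phi>' s)"
    using \<phi>_le_\<phi>_y0_plus_mult_\<phi>'[OF assms] by (intro mult_left_mono) auto
  finally show ?thesis using \<phi>''_eq[OF assms] by (simp add: algebra_simps)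
qed

lemma \<phi>''_ge:
  assumes "s \<ge> y\<^sub>0"
  shows "\<phi>'' s \<ge> (1 / 2 - max \<gamma> 0) * s * \<phi>' s - max \<gamma> 0 * \<phi> y\<^sub>0 - \<phi>' s * \<phi>' s powr (p - 1)"
proof -
  have "\<gamma> * \<phi> s \<le> max \<gamma> 0 * \<phi> s"
    using tail_pos[OF assms] by (intro mult_right_mono) auto
  also have "\<dots> \<le> max \<gamma> 0 * (\<phi> y\<^sub>0 + s * \<phi>' s)"
    using \<phi>_le_\<phi>_y0_plus_mult_\<phi>'[OF assms] by (intro mult_left_mono) auto
  finally show ?thesis using \<phi>''_eq[OF assms] by (simp add: algebra_simps)
qed

lemma powr_\<phi>'_le_linear: "\<exists>M>0. \<forall>s\<ge>y\<^sub>0. \<phi>' s powr (p - 1) \<le> M * s"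
proof -
  define M where "M = 1 / 2 + \<bar>\<gamma>\<bar> + \<bar>\<gamma>\<bar> * \<phi> y\<^sub>0 / (\<phi>' y\<^sub>0 * y\<^sub>0)"
  have "M > 0"
    using y0_pos tail_pos[of y\<^sub>0] by (simp add: M_def add_pos_nonneg)
  moreover have "\<phi>' s powr (p - 1) \<le> M * s" if s: "s \<ge> y\<^sub>0" for s
  proof -
    have u: "\<phi>' s \<ge> \<phi>' y\<^sub>0" "\<phi>' y\<^sub>0 > 0" using \<phi>'_mono[OF order_refl s] \<phi>'_pos y0_pos by auto
    have "\<phi>' s * \<phi>' s powr (p - 1) < (1 / 2 + \<bar>\<gamma>\<bar>) * s * \<phi>' s + \<bar>\<gamma>\<bar> * \<phi> y\<^sub>0"
      using \<phi>''_le[OF s] tail_pos[OF s] by linarith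
    moreover have "\<bar>\<gamma>\<bar> * \<phi> y\<^sub>0 \<le> \<phi>' s * s * (\<bar>\<gamma>\<bar> * \<phi> y\<^sub>0 / (\<phi>' y\<^sub>0 * y\<^sub>0))"
    proof -
      have "\<phi>' y\<^sub>0 * y\<^sub>0 \<le> \<phi>' s * s" using u s y0_pos by (intro mult_mono) auto
      then have "1 \<le> \<phi>' s * s / (\<phi>' y\<^sub>0 * y\<^sub>0)" using u y0_pos by simp
      from mult_left_mono[OF this, of "\<bar>\<gamma>\<bar> * \<phi> y\<^sub>0"] show ?thesis
        using tail_pos[of y\<^sub>0] by (simp add: field_simps)
    qed
    ultimately have "\<phi>' s * \<phi>' s powr (p - 1) < \<phi>' s * (M * s)"
      by (simp add: M_def algebra_simps)
    then show ?thesis using \<phi>'_pos[OF s] by simp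
  qed
  ultimately show ?thesis by blast
qed

lemma \<phi>'_le_powr: "\<exists>C>0. \<forall>y\<ge>y\<^sub>0. \<phi>' y \<le> C * y powr (1 / (p - 1))"
proof -
  obtain M where "M > 0" and M: "\<And>s. s \<ge> y\<^sub>0 \<Longrightarrow> \<phi>' s powr (p - 1) \<le> M * s"
    using powr_\<phi>'_le_linear by blast
  have "\<phi>' y \<le> M powr (1 / (p - 1)) * y powr (1 / (p - 1))" if "y \<ge> y\<^sub>0" for y
    using le_powr_inverse_if_powr_le[OF \<phi>'_pos[OF that] _ M[OF that]] p_gt_1 \<open>M > 0\<close>
      that y0_pos by (simp add: powr_mult)
  then show ?thesis using \<open>M > 0\<close> by (intro exI[of _ "M powr (1 / (p - 1))"]) auto
qed

lemma DERIV_powr_\<phi>':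
  assumes "s \<ge> y\<^sub>0"
  shows "DERIV (\<lambda>y. \<phi>' y powr (p - 1)) s :> (p - 1) * (\<phi>' s powr (p - 1) / \<phi>' s) * \<phi>'' s"
proof -
  have "\<phi>' s powr (p - 1 - of_nat 1) = \<phi>' s powr (p - 1) / \<phi>' s"
    using powr_diff[of "\<phi>' s" "p - 1" 1] \<phi>'_pos[OF assms] by simp
  with DERIV_fun_powr[OF DERIV_\<phi>'[OF assms] \<phi>'_pos[OF assms], of "p - 1"] show ?thesis
    by simp
qed

lemma eventually_linear_le_powr_\<phi>':
  assumes "0 < a" "a < 1 / 2 - max \<gamma> 0"
  shows "eventually (\<lambda>s. a * s \<le> \<phi>' s powr (p - 1)) at_top"
proof -
  define \<epsilon> where "\<epsilon> = 1 / 2 - max \<gamma> 0 - a"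
  define K where "K = max \<gamma> 0 * \<phi> y\<^sub>0"
  define u\<^sub>0 where "u\<^sub>0 = \<phi>' y\<^sub>0"
  define v\<^sub>0 where "v\<^sub>0 = u\<^sub>0 powr (p - 1)"
  define Y where "Y = max y\<^sub>0 (((a + 1) / ((p - 1) * v\<^sub>0) + K / u\<^sub>0) / \<epsilon>)"
  have "\<epsilon> > 0" "K \<ge> 0" "u\<^sub>0 > 0" "v\<^sub>0 > 0"
    using assms tail_pos[of y\<^sub>0] by (auto simp: \<epsilon>_def K_def u\<^sub>0_def v\<^sub>0_def)
  have growth: "1 \<le> (p - 1) * (\<phi>' s powr (p - 1) / \<phi>' s) * \<phi>'' s - a"
    if s: "s \<ge> Y" and neg: "\<phi>' s powr (p - 1) - a * s < 0" for s
  proof -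
    define u where "u = \<phi>' s"
    define v where "v = u powr (p - 1)"
    have "s \<ge> y\<^sub>0" using s by (simp add: Y_def)
    have "u \<ge> u\<^sub>0" "u > 0"
      using \<phi>'_mono[OF order_refl \<open>s \<ge> y\<^sub>0\<close>] \<phi>'_pos[OF \<open>s \<ge> y\<^sub>0\<close>] by (auto simp: u_def u\<^sub>0_def)
    then have "v \<ge> v\<^sub>0" using p_gt_1 \<open>u\<^sub>0 > 0\<close> by (simp add: v_def v\<^sub>0_def powr_mono2)
    have slack: "(a + 1) / ((p - 1) * v\<^sub>0) \<le> \<epsilon> * s - K / u\<^sub>0"
      using s \<open>\<epsilon> > 0\<close> by (simp add: Y_def pos_divide_le_eq mult.commute)
    have "u * v \<le> u * (a * s)"
      using neg \<open>u > 0\<close> by (simp add: u_def v_def)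
    then have \<phi>''_lower: "\<epsilon> * s * u - K \<le> \<phi>'' s"
      using \<phi>''_ge[OF \<open>s \<ge> y\<^sub>0\<close>] by (simp add: \<epsilon>_def K_def u_def v_def algebra_simps)
    have "0 \<le> (a + 1) / ((p - 1) * v\<^sub>0)"
      using assms p_gt_1 \<open>v\<^sub>0 > 0\<close> by simp
    with slack have "0 \<le> \<epsilon> * s - K / u\<^sub>0" by linarith
    have "K / u \<le> K / u\<^sub>0"
      using \<open>u \<ge> u\<^sub>0\<close> \<open>u\<^sub>0 > 0\<close> \<open>K \<ge> 0\<close> by (simp add: divide_left_mono)
    have "a + 1 \<le> (p - 1) * v\<^sub>0 * (\<epsilon> * s - K / u\<^sub>0)"
      using slack p_gt_1 \<open>v\<^sub>0 > 0\<close> by (simp add: pos_divide_le_eq mult.commute)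
    also have "\<dots> \<le> (p - 1) * v * (\<epsilon> * s - K / u\<^sub>0)"
      using p_gt_1 \<open>v \<ge> v\<^sub>0\<close> \<open>0 \<le> \<epsilon> * s - K / u\<^sub>0\<close> by (intro mult_right_mono) auto
    also have "\<dots> \<le> (p - 1) * v * (\<epsilon> * s - K / u)"
      using p_gt_1 \<open>v \<ge> v\<^sub>0\<close> \<open>v\<^sub>0 > 0\<close> \<open>K / u \<le> K / u\<^sub>0\<close> by (intro mult_left_mono) auto
    also have "\<dots> = (p - 1) * (v / u) * (\<epsilon> * s * u - K)"
      using \<open>u > 0\<close> by (simp add: field_simps)
    also have "\<dots> \<le> (p - 1) * (v / u) * \<phi>'' s"
      using p_gt_1 \<open>u > 0\<close> \<phi>''_lower by (intro mult_left_mono) (auto simp: v_def)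
    finally show ?thesis by (simp add: u_def v_def)
  qed
  have DW: "DERIV (\<lambda>y. \<phi>' y powr (p - 1) - a * y) s
      :> (p - 1) * (\<phi>' s powr (p - 1) / \<phi>' s) * \<phi>'' s - a" if "s \<ge> Y" for s
    using DERIV_diff[OF DERIV_powr_\<phi>' DERIV_cmult[OF DERIV_ident, of a]] that
    by (simp add: Y_def)
  have "eventually (\<lambda>s. \<phi>' s powr (p - 1) - a * s \<ge> 0) at_top"
    by (rule eventually_nonneg_if_DERIV_ge_1_where_neg[OF DW growth])
  then show ?thesis by eventually_elim simp
qed

lemma Liminf_powr_\<phi>'_div_ge:
  "Liminf at_top (\<lambda>y. ereal (\<phi>' y powr (p - 1) / y)) \<ge> ereal (1 / 2 - max \<gamma> 0)"
  unfolding le_Liminf_iff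
proof (intro allI impI)
  fix z :: ereal
  assume z: "z < ereal (1 / 2 - max \<gamma> 0)"
  obtain b where "z < ereal b" "b < 1 / 2 - max \<gamma> 0"
    using ereal_dense2[OF z] by auto
  define a where "a = max b ((1 / 2 - max \<gamma> 0) / 2)"
  have "0 < 1 / 2 - max \<gamma> 0"
    unfolding half_minus_max_\<gamma> using p_gt_1 by simp
  then have "z < ereal a" "0 < a" "a < 1 / 2 - max \<gamma> 0"
    using \<open>z < ereal b\<close> \<open>b < _\<close> by (auto simp: a_def less_max_iff_disj intro: less_le_trans)
  have "eventually (\<lambda>y. a * y \<le> \<phi>' y powr (p - 1) \<and> y > 0) at_top"
    using eventually_linear_le_powr_\<phi>'[OF \<open>0 < a\<close> \<open>a < _\<close>] eventually_gt_at_top[of 0]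
    by eventually_elim simp
  then show "eventually (\<lambda>y. z < ereal (\<phi>' y powr (p - 1) / y)) at_top"
  proof eventually_elim
    case (elim y)
    then have "ereal a \<le> ereal (\<phi>' y powr (p - 1) / y)" by (simp add: pos_le_divide_eq)
    with \<open>z < ereal a\<close> show ?case by order
  qed
qed

end

theorem lemma7p3:
  fixes p \<alpha> R y\<^sub>0 :: real
    and \<phi> \<phi>' \<phi>'' :: "real \<Rightarrow> real"
  assumes p: "p > 1"
    and d1: "\<And>y. y \<ge> 0 \<Longrightarrow> (\<phi> has_real_derivative \<phi>' y) (at y within {0..})"
    and d2: "\<And>y. y \<ge> 0 \<Longrightarrow> (\<phi>' has_real_derivative \<phi>'' y) (at y within {0..})"
    and ode: "\<And>y. y \<ge> 0 \<Longrightarrow>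
       \<phi>'' y = y / 2 * \<phi>' y - ((p - 2) / (2 * (p - 1))) * \<phi> y - \<bar>\<phi>' y\<bar> powr p"
    and init0: "\<phi> 0 = 0"
    and init1: "\<phi>' 0 = \<alpha>"
    and \<alpha>pos: "\<alpha> > 0"
    and pos: "\<And>y. y > 0 \<Longrightarrow> \<phi> y > 0 \<and> \<phi>' y > 0"
    and Rpos: "R > 0"
    and conc: "\<And>y. 0 \<le> y \<Longrightarrow> y < R \<Longrightarrow> \<phi>'' y < 0"
    and conv: "\<And>y. y > R \<Longrightarrow> \<phi>'' y > 0"
    and y0pos: "y\<^sub>0 > 0"
    and y0: "\<And>y. y \<ge> y\<^sub>0 \<Longrightarrow> \<phi> y > 0 \<and> \<phi>' y > 0 \<and> \<phi>'' y > 0"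
  shows "(\<exists>C>0. \<forall>y\<ge>y\<^sub>0. \<phi>' y \<le> C * y powr (1 / (p - 1)))
    \<and> Liminf at_top (\<lambda>y. ereal ((\<phi>' y) powr (p - 1) / y)) \<ge> ereal (min 1 (1 / (p - 1)) / 2)
    \<and> (\<exists>C\<^sub>1>0. \<forall>y\<ge>1. \<phi>' y \<ge> C\<^sub>1 * y powr (1 / (p - 1)))"
proof -
  have has_deriv_\<phi>': "DERIV \<phi>' y :> \<phi>'' y" if "y > 0" for y
    using has_real_derivative_at_within_atLeast_imp_at[OF d2] that by simp
  interpret convex_profile_tail p y\<^sub>0 \<phi> \<phi>' \<phi>''
    by unfold_locales
      (use p y0pos y0 ode has_deriv_\<phi>' has_real_derivative_at_within_atLeast_imp_at[OF d1] in auto)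
  define c where "c = min 1 (1 / (p - 1)) / 2"
  have "c > 0" and c_eq: "1 / 2 - max \<gamma> 0 = c"
    using p by (simp_all add: c_def half_minus_max_\<gamma>)
  then have c_half: "c / 2 > 0" "c / 2 < 1 / 2 - max \<gamma> 0" by simp_all
  have "eventually (\<lambda>y. c / 2 * y \<le> \<phi>' y powr (p - 1) \<and> y > 0) at_top"
    using eventually_conj[OF eventually_linear_le_powr_\<phi>'[OF c_half] eventually_gt_at_top[of 0]] .
  then have "eventually (\<lambda>y. (c / 2) powr (1 / (p - 1)) * y powr (1 / (p - 1)) \<le> \<phi>' y) at_top"
  proof eventually_elim
    case (elim y)
    then have "(c / 2 * y) powr (1 / (p - 1)) \<le> \<phi>' y"
      using pos[of y] p c_half(1) by (intro powr_inverse_le_if_le_powr) auto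
    then show ?case by (simp only: powr_mult)
  qed
  moreover have "continuous_on {1..} \<phi>'"
    by (intro continuous_at_imp_continuous_on ballI DERIV_isCont[OF has_deriv_\<phi>']) auto
  ultimately have "\<exists>C\<^sub>1>0. \<forall>y\<ge>1. C\<^sub>1 * y powr (1 / (p - 1)) \<le> \<phi>' y"
    using pos c_half(1) by (intro ge_powr_on_atLeast_1_if_eventually_ge) auto
  then show ?thesis
    using \<phi>'_le_powr Liminf_powr_\<phi>'_div_ge unfolding c_eq c_def by auto
qed

end
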